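(* Let $f\in C^2(\mathbb{R})$ with $f''<0$, let $u_0\in BV(\mathbb{R})$, let $u$ be the entropy admissible solution of $\partial_t u+\partial_x[f(u)]=0$, $u(0,\cdot)=u_0$, and set $w:=f\circ u$. Let $\gamma:]t_1,t_2[\to\mathbb{R}$ be a $C^1$ curve across which $u$ is discontinuous, fix $\tau\in]t_1,t_2[$, and assume that there is a neighborhood $\mathcal U$ of $(\tau,\gamma(\tau))$ such that $u$ admits continuous extensions to $\mathcal U\cap\{(t,x):x\le\gamma(t)\}$ and to $\mathcal U\cap\{(t,x):x\ge\gamma(t)\}$. If $\gamma'(\tau)\ne0$, then the limits below exist and $$\lim_{t\to\tau^+}w(t,\gamma(\tau))\le\lim_{t\to\tau^-}w(t,\gamma(\tau)).$$ If $\gamma'(\tau)=0$, then $w$ is continuous at $(\tau,\gamma(\tau))$ (i.e. the continuous extensions of $w$ from the two sides of $\gamma$ coincide at this point).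
   Context: The entropy admissible solution is the Kružkov solution of the Cauchy problem (the unique bounded function satisfying $\iint\partial_t\varphi|u-c|+\partial_x\varphi\,\mathrm{sign}(u-c)[f(u)-f(c)]\,dx\,dt+\int\varphi(0,\cdot)|u_0-c|\,dx\ge0$ for all $c\in\mathbb{R}$ and nonnegative test functions $\varphi$). "$u$ is discontinuous across $\gamma$" means that the one-sided limits of $u$ from the left and from the right of $\gamma$ differ. *)

theory Defs
  imports "HOL-Analysis.Analysis"
begin

definition bounded_pointwise_variation :: "(real \<Rightarrow> real) \<Rightarrow> bool" where
  "bounded_pointwise_variation v \<longleftrightarrow>
     (\<exists>M. \<forall>(n::nat) (xs::nat \<Rightarrow> real). (\<forall>i<n. xs i < xs (Suc i)) \<longrightarrow>
        (\<Sum>i<n. \<bar>v (xs (Suc i)) - v (xs i)\<bar>) \<le> M)"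

text \<open>BV(R): integrable functions having a representative (a.e. equal function)
  of bounded pointwise variation, i.e. finite essential variation.\<close>
definition BV :: "(real \<Rightarrow> real) \<Rightarrow> bool" where
  "BV u0 \<longleftrightarrow> integrable lborel u0 \<and>
     (\<exists>v. (AE x in lborel. v x = u0 x) \<and> bounded_pointwise_variation v)"

text \<open>Nonnegative compactly supported C^1 test functions on R^2 (variables (t,x)),
  with partial derivatives phit (in t) and phix (in x).\<close>
definition test_fun :: "(real \<times> real \<Rightarrow> real) \<Rightarrow> (real \<times> real \<Rightarrow> real) \<Rightarrow> (real \<times> real \<Rightarrow> real) \<Rightarrow> bool" where
  "test_fun phi phit phix \<longleftrightarrow>
     (\<forall>p. (phi has_derivative (\<lambda>(h, k). phit p * h + phix p * k)) (at p)) \<and>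
     continuous_on UNIV phit \<and> continuous_on UNIV phix \<and>
     (\<forall>p. 0 \<le> phi p) \<and> bounded {p. phi p \<noteq> 0}"

text \<open>Kruzkov entropy admissible solution of u_t + f(u)_x = 0, u(0,.) = u0.
  The solution is a function of (t,x), relevant for t > 0.\<close>
definition kruzkov_solution :: "(real \<Rightarrow> real) \<Rightarrow> (real \<Rightarrow> real) \<Rightarrow> (real \<times> real \<Rightarrow> real) \<Rightarrow> bool" where
  "kruzkov_solution f u0 u \<longleftrightarrow>
     u \<in> borel_measurable lborel \<and>
     (\<exists>M. AE p in lborel. fst p > 0 \<longrightarrow> \<bar>u p\<bar> \<le> M) \<and>
     (\<forall>c phi phit phix. test_fun phi phit phix \<longrightarrow>
        0 \<le> (\<integral>p. indicator {p. fst p > 0} p *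
                 (phit p * \<bar>u p - c\<bar> + phix p * sgn (u p - c) * (f (u p) - f c)) \<partial>lborel)
           + (\<integral>x. phi (0, x) * \<bar>u0 x - c\<bar> \<partial>lborel))"

definition left_side :: "(real \<times> real) set \<Rightarrow> real \<Rightarrow> real \<Rightarrow> (real \<Rightarrow> real) \<Rightarrow> (real \<times> real) set" where
  "left_side U t1 t2 \<gamma> = {(t, x) \<in> U. t1 < t \<and> t < t2 \<and> x \<le> \<gamma> t}"
definition right_side :: "(real \<times> real) set \<Rightarrow> real \<Rightarrow> real \<Rightarrow> (real \<Rightarrow> real) \<Rightarrow> (real \<times> real) set" where
  "right_side U t1 t2 \<gamma> = {(t, x) \<in> U. t1 < t \<and> t < t2 \<and> \<gamma> t \<le> x}"

definition discontinuous_across :: "(real \<times> real \<Rightarrow> real) \<Rightarrow> real \<Rightarrow> real \<Rightarrow> (real \<Rightarrow> real) \<Rightarrow> bool" where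
  "discontinuous_across u t1 t2 \<gamma> \<longleftrightarrow>
     (\<forall>t. t1 < t \<and> t < t2 \<longrightarrow>
        (\<exists>l r. l \<noteq> r \<and>
           (u \<longlongrightarrow> l) (at (t, \<gamma> t) within {(s, y). t1 < s \<and> s < t2 \<and> y < \<gamma> s}) \<and>
           (u \<longlongrightarrow> r) (at (t, \<gamma> t) within {(s, y). t1 < s \<and> s < t2 \<and> \<gamma> s < y})))"

end

theory Submission
  imports Defs
begin

text \<open>
  Test the Kruzkov inequality with a bump function supported in an \<open>\<epsilon>\<close>-neighbourhood of
  \<open>(\<tau>, \<gamma> \<tau>)\<close> and tilted along the tangent of the curve, and rescale by \<open>\<epsilon>\<close>.
  As \<open>\<epsilon> \<rightarrow> 0\<close>, dominated convergence and the one-sided continuity of \<open>u\<close> show that the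
  traces \<open>a = uL (\<tau>, \<gamma> \<tau>)\<close>, \<open>b = uR (\<tau>, \<gamma> \<tau>)\<close> and the speed \<open>\<sigma> = \<gamma>' \<tau>\<close> satisfy
  \<open>q\<^sub>c b - q\<^sub>c a \<le> \<sigma> * (\<bar>b - c\<bar> - \<bar>a - c\<bar>)\<close> for every \<open>c\<close>, where \<open>q\<^sub>c v = sgn (v - c) * (f v - f c)\<close>.
  Constants \<open>c\<close> beyond both states give the Rankine-Hugoniot condition \<open>f b - f a = \<sigma> * (b - a)\<close>;
  the midpoint \<open>c = (a + b) / 2\<close> and the strict concavity of \<open>f\<close> give Lax's condition \<open>a \<le> b\<close>.
  If \<open>\<sigma> \<noteq> 0\<close>, the line \<open>x = \<gamma> \<tau>\<close> crosses the curve, so \<open>f (u (t, \<gamma> \<tau>))\<close> tends to \<open>f a\<close> on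
  one side of \<open>\<tau>\<close> and to \<open>f b\<close> on the other, in an order fixed by the sign of \<open>\<sigma>\<close>;
  the inequality between the two limits is then \<open>\<sigma> * (b - a) \<ge> 0\<close>. If \<open>\<sigma> = 0\<close>,
  Rankine-Hugoniot says \<open>f a = f b\<close>.
\<close>

section \<open>A continuously differentiable bump function\<close>

lemma has_real_derivative_max_0_power2:
  "((\<lambda>y. (max 0 y)\<^sup>2) has_real_derivative 2 * max 0 y) (at y)" for y :: real
proof (cases y "0::real" rule: linorder_cases)
  case less
  have "((\<lambda>y. 0) has_real_derivative 2 * max 0 y) (at y)" using less by simp
  then show ?thesis
    by (rule has_field_derivative_transform_within_open[where S="{..<0}"]) (use less in auto)
next
  case equal
  have "((\<lambda>h. ((max 0 h)\<^sup>2 - (max 0 0)\<^sup>2) / h) \<longlongrightarrow> 0) (at (0::real))"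
  proof (rule tendsto_0_le[where f="\<lambda>h. h" and K=1])
    show "\<forall>\<^sub>F h::real in at 0. norm (((max 0 h)\<^sup>2 - (max 0 0)\<^sup>2) / h) \<le> norm h * 1"
      by (intro always_eventually allI) (simp add: max_def power2_eq_square)
  qed (rule tendsto_ident_at)
  then show ?thesis using equal by (simp add: DERIV_def)
next
  case greater
  have "((\<lambda>y. y\<^sup>2) has_real_derivative 2 * max 0 y) (at y)"
    using greater by (auto intro!: derivative_eq_intros)
  then show ?thesis
    by (rule has_field_derivative_transform_within_open[where S="{0<..}"]) (use greater in auto)
qed

definition bump :: "real \<Rightarrow> real" where
  "bump s = (max 0 (1 - s\<^sup>2))\<^sup>2"

definition bump' :: "real \<Rightarrow> real" where
  "bump' s = -4 * s * max 0 (1 - s\<^sup>2)"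

lemma bump_has_real_derivative: "(bump has_real_derivative bump' s) (at s)"
proof -
  have "((\<lambda>s. 1 - s\<^sup>2) has_real_derivative - 2 * s) (at s)"
    by (auto intro!: derivative_eq_intros)
  from DERIV_chain2[OF has_real_derivative_max_0_power2 this] show ?thesis
    unfolding bump_def[abs_def] bump'_def by (simp add: algebra_simps)
qed

lemma isCont_bump: "isCont bump s"
  using bump_has_real_derivative by (rule DERIV_isCont)

lemma isCont_bump': "isCont bump' s"
  unfolding bump'_def by (intro continuous_intros)

lemma continuous_on_bump: "continuous_on S bump"
  and continuous_on_bump': "continuous_on S bump'"
  using isCont_bump isCont_bump' by (blast intro: continuous_at_imp_continuous_on)+

lemma continuous_on_bump_compose [continuous_intros]:
  "continuous_on S g \<Longrightarrow> continuous_on S (\<lambda>x. bump (g x))"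
  by (rule continuous_on_compose2[OF continuous_on_bump]) auto

lemma continuous_on_bump'_compose [continuous_intros]:
  "continuous_on S g \<Longrightarrow> continuous_on S (\<lambda>x. bump' (g x))"
  by (rule continuous_on_compose2[OF continuous_on_bump']) auto

lemma borel_measurable_bump [measurable]: "bump \<in> borel_measurable borel"
  and borel_measurable_bump' [measurable]: "bump' \<in> borel_measurable borel"
  by (intro borel_measurable_continuous_onI continuous_on_bump continuous_on_bump')+

lemma bump_nonneg: "0 \<le> bump s"
  by (simp add: bump_def)

lemma bump_le_1: "bump s \<le> 1"
  unfolding bump_def by (rule power_le_one) auto

lemma abs_bump'_le_4: "\<bar>bump' s\<bar> \<le> 4"
proof (cases "s\<^sup>2 \<le> 1")
  case True
  then have "\<bar>s\<bar> \<le> 1" by (simp add: abs_square_le_1)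
  then have "\<bar>s\<bar> * (1 - s\<^sup>2) \<le> 1" using True by (intro mult_le_one) auto
  then show ?thesis using True by (simp add: bump'_def abs_mult)
qed (simp add: bump'_def)

lemma bump_0 [simp]: "bump 0 = 1"
  by (simp add: bump_def)

lemma
  assumes "1 \<le> \<bar>s\<bar>"
  shows bump_vanishes: "bump s = 0" and bump'_vanishes: "bump' s = 0"
proof -
  have "1 - s\<^sup>2 \<le> 0" using assms abs_square_less_1[of s] by linarith
  then show "bump s = 0" "bump' s = 0" by (simp_all add: bump_def bump'_def)
qed

lemma bump_eq_indicator: "bump s = bump s * indicator {-1..1} s"
  and bump'_eq_indicator: "bump' s = bump' s * indicator {-1..1} s"
proof -
  have "s \<notin> {-1..1} \<Longrightarrow> 1 \<le> \<bar>s\<bar>" by auto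
  then show "bump s = bump s * indicator {-1..1} s" "bump' s = bump' s * indicator {-1..1} s"
    using bump_vanishes bump'_vanishes by (auto simp: indicator_def)
qed

lemma integrable_bump: "integrable lborel bump"
proof -
  have "integrable lborel (\<lambda>s. bump s * indicator {-1..1} s)"
    by (intro borel_integrable_atLeastAtMost isCont_bump)
  then show ?thesis by (simp flip: bump_eq_indicator)
qed

lemma integrable_bump': "integrable lborel bump'"
proof -
  have "integrable lborel (\<lambda>s. bump' s * indicator {-1..1} s)"
    by (intro borel_integrable_atLeastAtMost isCont_bump')
  then show ?thesis by (simp flip: bump'_eq_indicator)
qed

lemma integral_bump: "(\<integral>s. bump s \<partial>lborel) = 16 / 15"
proof -
  define F where "F s = s - 2 / 3 * s ^ 3 + s ^ 5 / 5" for s :: real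
  have "(\<integral>s. indicator {-1..1} s *\<^sub>R (1 - s\<^sup>2)\<^sup>2 \<partial>lborel) = F 1 - F (-1)"
  proof (rule integral_FTC_atLeastAtMost)
    fix s :: real
    have "(F has_real_derivative (1 - s\<^sup>2)\<^sup>2) (at s)"
      unfolding F_def by (auto intro!: derivative_eq_intros simp: power2_eq_square power4_eq_xxxx algebra_simps)
    then show "(F has_vector_derivative (1 - s\<^sup>2)\<^sup>2) (at s within {-1..1})"
      by (simp add: has_real_derivative_iff_has_vector_derivative has_vector_derivative_at_within)
  qed (auto intro!: continuous_intros)
  moreover have "bump s = indicator {-1..1} s * (1 - s\<^sup>2)\<^sup>2" for s
    using bump_vanishes[of s] abs_square_le_1[of s] by (auto simp: bump_def indicator_def abs_le_iff)
  ultimately show ?thesis by (simp add: F_def)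
qed

lemma integral_bump'_atLeastAtMost:
  assumes "a \<le> b"
  shows "(\<integral>s. bump' s * indicator {a..b} s \<partial>lborel) = bump b - bump a"
  using integral_FTC_atLeastAtMost[OF assms, of bump bump'] bump_has_real_derivative continuous_on_bump'
  by (simp add: has_real_derivative_iff_has_vector_derivative has_vector_derivative_at_within mult.commute)

lemma integral_bump'_step: "(\<integral>s. bump' s * (if s < 0 then A else B) \<partial>lborel) = A - B"
proof -
  have "bump' s * (if s < 0 then A else B) =
      A * (bump' s * indicator {-1..0} s) + B * (bump' s * indicator {0..1} s)" for s
    using bump'_vanishes[of s] by (auto simp: indicator_def bump'_def abs_le_iff)
  moreover have "integrable lborel (\<lambda>s. bump' s * indicator {a..b} s)" for a b :: real
    using integrable_bump' by (simp add: integrable_real_mult_indicator)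
  ultimately show ?thesis
    using integral_bump'_atLeastAtMost[of "-1" 0] integral_bump'_atLeastAtMost[of 0 1]
    by (simp add: bump_vanishes)
qed

lemma integral_bump': "(\<integral>s. bump' s \<partial>lborel) = 0"
  using integral_bump'_step[of 1 1] by simp

section \<open>The entropy inequality tested with a tilted bump\<close>

definition kruzkov_flux :: "(real \<Rightarrow> real) \<Rightarrow> real \<Rightarrow> real \<Rightarrow> real" where
  "kruzkov_flux f c v = sgn (v - c) * (f v - f c)"

lemma abs_kruzkov_flux_le: "\<bar>kruzkov_flux f c v\<bar> \<le> \<bar>f v - f c\<bar>"
  by (simp add: kruzkov_flux_def abs_mult abs_sgn_eq)

lemma isCont_kruzkov_flux:
  assumes "continuous_on UNIV f"
  shows "isCont (kruzkov_flux f c) v"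
proof (cases "v = c")
  case True
  have "((\<lambda>v. f v - f c) \<longlongrightarrow> 0) (at c)"
    using assms by (simp add: continuous_on_eq_continuous_at isCont_def LIM_zero)
  then have "(kruzkov_flux f c \<longlongrightarrow> 0) (at c)"
    by (rule tendsto_0_le[where K=1]) (simp add: abs_kruzkov_flux_le)
  then show ?thesis using True by (simp add: isCont_def kruzkov_flux_def)
next
  case False
  then show ?thesis
    using assms unfolding kruzkov_flux_def
    by (intro continuous_intros) (auto simp: continuous_on_eq_continuous_at)
qed

definition tilted_bump :: "real \<Rightarrow> real \<Rightarrow> real \<Rightarrow> real \<Rightarrow> real \<times> real \<Rightarrow> real" where
  "tilted_bump \<tau> x0 \<sigma> \<epsilon> p = bump ((fst p - \<tau>) / \<epsilon>) * bump ((snd p - x0 - \<sigma> * (fst p - \<tau>)) / \<epsilon>)"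

definition tilted_bump_t :: "real \<Rightarrow> real \<Rightarrow> real \<Rightarrow> real \<Rightarrow> real \<times> real \<Rightarrow> real" where
  "tilted_bump_t \<tau> x0 \<sigma> \<epsilon> p =
     bump' ((fst p - \<tau>) / \<epsilon>) / \<epsilon> * bump ((snd p - x0 - \<sigma> * (fst p - \<tau>)) / \<epsilon>)
     - \<sigma> / \<epsilon> * bump ((fst p - \<tau>) / \<epsilon>) * bump' ((snd p - x0 - \<sigma> * (fst p - \<tau>)) / \<epsilon>)"

definition tilted_bump_x :: "real \<Rightarrow> real \<Rightarrow> real \<Rightarrow> real \<Rightarrow> real \<times> real \<Rightarrow> real" where
  "tilted_bump_x \<tau> x0 \<sigma> \<epsilon> p =
     bump ((fst p - \<tau>) / \<epsilon>) * bump' ((snd p - x0 - \<sigma> * (fst p - \<tau>)) / \<epsilon>) / \<epsilon>"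

lemma tilted_bump_support:
  assumes "0 < \<epsilon>"
    and "tilted_bump \<tau> x0 \<sigma> \<epsilon> p \<noteq> 0 \<or> tilted_bump_t \<tau> x0 \<sigma> \<epsilon> p \<noteq> 0 \<or> tilted_bump_x \<tau> x0 \<sigma> \<epsilon> p \<noteq> 0"
  shows "p \<in> cbox (\<tau> - \<epsilon>, x0 - (1 + \<bar>\<sigma>\<bar>) * \<epsilon>) (\<tau> + \<epsilon>, x0 + (1 + \<bar>\<sigma>\<bar>) * \<epsilon>)"
proof -
  have "\<bar>(fst p - \<tau>) / \<epsilon>\<bar> < 1" "\<bar>(snd p - x0 - \<sigma> * (fst p - \<tau>)) / \<epsilon>\<bar> < 1"
    using assms(2) bump_vanishes bump'_vanishes
    unfolding tilted_bump_def tilted_bump_t_def tilted_bump_x_def not_le[symmetric] by fastforce+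
  then have t: "\<bar>fst p - \<tau>\<bar> \<le> \<epsilon>" and x: "\<bar>snd p - x0 - \<sigma> * (fst p - \<tau>)\<bar> \<le> \<epsilon>"
    using assms(1) by (simp_all add: abs_divide)
  have "\<bar>\<sigma> * (fst p - \<tau>)\<bar> \<le> \<bar>\<sigma>\<bar> * \<epsilon>"
    using t by (simp add: abs_mult mult_left_mono)
  then have "\<bar>snd p - x0\<bar> \<le> (1 + \<bar>\<sigma>\<bar>) * \<epsilon>"
    using x by (simp add: algebra_simps)
  then show ?thesis
    using t by (cases p) (simp add: cbox_Pair_iff abs_le_iff algebra_simps)
qed

lemma continuous_on_tilted_bump_t: "0 < \<epsilon> \<Longrightarrow> continuous_on S (tilted_bump_t \<tau> x0 \<sigma> \<epsilon>)"
  and continuous_on_tilted_bump_x: "0 < \<epsilon> \<Longrightarrow> continuous_on S (tilted_bump_x \<tau> x0 \<sigma> \<epsilon>)"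
  unfolding tilted_bump_t_def[abs_def] tilted_bump_x_def[abs_def] by (intro continuous_intros; simp)+

lemma test_fun_tilted_bump:
  assumes "0 < \<epsilon>"
  shows "test_fun (tilted_bump \<tau> x0 \<sigma> \<epsilon>) (tilted_bump_t \<tau> x0 \<sigma> \<epsilon>) (tilted_bump_x \<tau> x0 \<sigma> \<epsilon>)"
  unfolding test_fun_def
proof (intro conjI allI continuous_on_tilted_bump_t continuous_on_tilted_bump_x assms)
  fix p :: "real \<times> real"
  show "(tilted_bump \<tau> x0 \<sigma> \<epsilon> has_derivative
          (\<lambda>(h, k). tilted_bump_t \<tau> x0 \<sigma> \<epsilon> p * h + tilted_bump_x \<tau> x0 \<sigma> \<epsilon> p * k)) (at p)"
    unfolding tilted_bump_def[abs_def]
    by (rule has_derivative_eq_rhs[OF has_derivative_mult[OF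
          DERIV_compose_FDERIV[OF bump_has_real_derivative] DERIV_compose_FDERIV[OF bump_has_real_derivative]]],
        (auto intro!: derivative_eq_intros)[2])
      (use assms in \<open>auto simp: tilted_bump_t_def tilted_bump_x_def fun_eq_iff field_simps\<close>)
  show "0 \<le> tilted_bump \<tau> x0 \<sigma> \<epsilon> p"
    by (simp add: tilted_bump_def bump_nonneg)
next
  show "bounded {p. tilted_bump \<tau> x0 \<sigma> \<epsilon> p \<noteq> 0}"
    using tilted_bump_support[OF assms] by (blast intro: bounded_subset[OF bounded_cbox])
qed

lemma abs_kruzkov_integrand_le:
  fixes v pt px :: real
  assumes "\<bar>v\<bar> \<le> M" "\<bar>f v\<bar> \<le> F" "\<bar>pt\<bar> \<le> Bt" "\<bar>px\<bar> \<le> Bx"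
  shows "\<bar>pt * \<bar>v - c\<bar> + px * sgn (v - c) * (f v - f c)\<bar> \<le> Bt * (M + \<bar>c\<bar>) + Bx * (F + \<bar>f c\<bar>)"
proof -
  have "\<bar>v - c\<bar> \<le> M + \<bar>c\<bar>" "\<bar>sgn (v - c) * (f v - f c)\<bar> \<le> F + \<bar>f c\<bar>"
    using assms(1,2) by (auto simp: abs_mult abs_sgn_eq)
  then have "\<bar>pt * \<bar>v - c\<bar>\<bar> \<le> Bt * (M + \<bar>c\<bar>)" "\<bar>px * (sgn (v - c) * (f v - f c))\<bar> \<le> Bx * (F + \<bar>f c\<bar>)"
    using assms(3,4) unfolding abs_mult by (simp_all add: mult_mono)
  then show ?thesis
    unfolding mult.assoc by (rule order_trans[OF abs_triangle_ineq add_mono])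
qed

lemma integrable_kruzkov_integrand:
  fixes phit phix :: "real \<times> real \<Rightarrow> real"
  assumes sol: "kruzkov_solution f u0 u" and f: "continuous_on UNIV f"
    and phi: "continuous_on UNIV phit" "continuous_on UNIV phix"
    and K: "compact K" "\<And>p. p \<notin> K \<Longrightarrow> phit p = 0 \<and> phix p = 0"
  shows "integrable lborel (\<lambda>p. indicator {p. fst p > 0} p *
           (phit p * \<bar>u p - c\<bar> + phix p * sgn (u p - c) * (f (u p) - f c)))"
    (is "integrable _ ?g")
proof -
  obtain M where M: "AE p in lborel. fst p > 0 \<longrightarrow> \<bar>u p\<bar> \<le> M"
    and [measurable]: "u \<in> borel_measurable lborel"
    using sol by (auto simp: kruzkov_solution_def)
  have "bounded (phit ` K)" "bounded (phix ` K)" "bounded (f ` {-M..M})"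
    using phi f K(1)
    by (auto intro!: compact_imp_bounded compact_continuous_image intro: continuous_on_subset)
  then obtain Bt Bx F where B: "\<forall>p\<in>K. \<bar>phit p\<bar> \<le> Bt" "\<forall>p\<in>K. \<bar>phix p\<bar> \<le> Bx"
    and F: "\<forall>v\<in>{-M..M}. \<bar>f v\<bar> \<le> F"
    unfolding bounded_iff by auto
  let ?C = "\<bar>Bt\<bar> * (\<bar>M\<bar> + \<bar>c\<bar>) + \<bar>Bx\<bar> * (\<bar>F\<bar> + \<bar>f c\<bar>)"
  have C_nonneg: "0 \<le> ?C" by simp
  have bound: "AE p in lborel. norm (?g p) \<le> norm (?C * indicator K p)"
    using M
  proof eventually_elim
    case (elim p)
    show ?case
    proof (cases "p \<in> K \<and> fst p > 0")
      case True
      then have "\<bar>u p\<bar> \<le> \<bar>M\<bar>" "\<bar>f (u p)\<bar> \<le> \<bar>F\<bar>" "\<bar>phit p\<bar> \<le> \<bar>Bt\<bar>" "\<bar>phix p\<bar> \<le> \<bar>Bx\<bar>"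
        using elim B F[rule_format, of "u p"] by (auto simp: abs_le_iff)
      then have "\<bar>phit p * \<bar>u p - c\<bar> + phix p * sgn (u p - c) * (f (u p) - f c)\<bar> \<le> ?C"
        by (rule abs_kruzkov_integrand_le)
      moreover have "norm (?g p) = \<bar>phit p * \<bar>u p - c\<bar> + phix p * sgn (u p - c) * (f (u p) - f c)\<bar>"
        "norm (?C * indicator K p) = ?C"
        using True C_nonneg by simp_all
      ultimately show ?thesis
        by linarith
    next
      case False
      then show ?thesis using K(2)[of p] by auto
    qed
  qed
  have integrable_C: "integrable lborel (\<lambda>p. ?C * indicator K p)"
    using K(1) emeasure_compact_finite[OF K(1)]
    by (intro integrable_mult_right) (simp add: integrable_indicator_iff compact_imp_closed borel_closed)
  have [measurable]: "{p :: real \<times> real. 0 < fst p} \<in> sets borel"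
    by (intro borel_open open_Collect_less continuous_intros)
  have [measurable]: "phit \<in> borel_measurable borel" "phix \<in> borel_measurable borel" "f \<in> borel_measurable borel"
    using phi f by (auto intro: borel_measurable_continuous_onI)
  show ?thesis
    by (rule Bochner_Integration.integrable_bound[OF integrable_C _ bound]) measurable
qed

definition kruzkov_density :: "(real \<Rightarrow> real) \<Rightarrow> real \<Rightarrow> real \<Rightarrow> real \<Rightarrow> real \<Rightarrow> real \<Rightarrow> real" where
  "kruzkov_density f c \<sigma> s w v =
     bump' s * bump w * \<bar>v - c\<bar> + bump s * bump' w * (kruzkov_flux f c v - \<sigma> * \<bar>v - c\<bar>)"

text \<open>In the coordinates \<open>(s, w)\<close>, zoomed by \<open>1 / \<epsilon>\<close>, the line through \<open>(\<tau>, x0)\<close> with slope \<open>\<sigma>\<close> becomes \<open>w = 0\<close>.\<close>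

definition blow_up :: "real \<Rightarrow> real \<Rightarrow> real \<Rightarrow> real \<Rightarrow> real \<Rightarrow> real \<Rightarrow> real \<times> real" where
  "blow_up \<tau> x0 \<sigma> \<epsilon> s w = (\<tau> + \<epsilon> * s, x0 + \<sigma> * (\<epsilon> * s) + \<epsilon> * w)"

lemma kruzkov_integrand_tilted_bump_blow_up:
  fixes \<tau> x0 \<sigma> \<epsilon> s w :: real
  assumes "0 < \<epsilon>" "\<epsilon> < \<tau>"
  defines "p \<equiv> blow_up \<tau> x0 \<sigma> \<epsilon> s w"
  shows "indicator {p. fst p > 0} p *
           (tilted_bump_t \<tau> x0 \<sigma> \<epsilon> p * \<bar>u p - c\<bar> + tilted_bump_x \<tau> x0 \<sigma> \<epsilon> p * sgn (u p - c) * (f (u p) - f c))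
         = kruzkov_density f c \<sigma> s w (u p) / \<epsilon>"
proof (cases "\<bar>s\<bar> < 1")
  case True
  then have "- \<epsilon> < \<epsilon> * s"
    using assms(1) mult_strict_left_mono[of "-s" 1 \<epsilon>] by (simp add: abs_less_iff)
  then have "0 < fst p"
    using assms(2) by (simp add: p_def blow_up_def)
  then show ?thesis
    using assms(1)
    by (simp add: p_def blow_up_def tilted_bump_t_def tilted_bump_x_def kruzkov_density_def kruzkov_flux_def
        field_simps)
next
  case False
  then show ?thesis
    using assms(1)
    by (simp add: p_def blow_up_def tilted_bump_t_def tilted_bump_x_def kruzkov_density_def bump_vanishes bump'_vanishes)
qed

lemma kruzkov_density_blow_up_integral_nonneg:
  assumes sol: "kruzkov_solution f u0 u" and f: "continuous_on UNIV f" and \<epsilon>: "0 < \<epsilon>" "\<epsilon> < \<tau>"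
  shows "0 \<le> (\<integral>s. (\<integral>w. kruzkov_density f c \<sigma> s w (u (blow_up \<tau> x0 \<sigma> \<epsilon> s w)) \<partial>lborel) \<partial>lborel)"
proof -
  let ?phit = "tilted_bump_t \<tau> x0 \<sigma> \<epsilon>" and ?phix = "tilted_bump_x \<tau> x0 \<sigma> \<epsilon>"
  let ?g = "\<lambda>p. indicator {p. fst p > 0} p * (?phit p * \<bar>u p - c\<bar> + ?phix p * sgn (u p - c) * (f (u p) - f c))"
  let ?K = "cbox (\<tau> - \<epsilon>, x0 - (1 + \<bar>\<sigma>\<bar>) * \<epsilon>) (\<tau> + \<epsilon>, x0 + (1 + \<bar>\<sigma>\<bar>) * \<epsilon>)"
  have support: "tilted_bump \<tau> x0 \<sigma> \<epsilon> p \<noteq> 0 \<or> ?phit p \<noteq> 0 \<or> ?phix p \<noteq> 0 \<Longrightarrow> p \<in> ?K" for p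
    by (rule tilted_bump_support[OF \<epsilon>(1)])
  have "test_fun (tilted_bump \<tau> x0 \<sigma> \<epsilon>) ?phit ?phix"
    by (rule test_fun_tilted_bump[OF \<epsilon>(1)])
  then have "0 \<le> integral\<^sup>L lborel ?g + (\<integral>x. tilted_bump \<tau> x0 \<sigma> \<epsilon> (0, x) * \<bar>u0 x - c\<bar> \<partial>lborel)"
    using sol unfolding kruzkov_solution_def by blast
  moreover have "tilted_bump \<tau> x0 \<sigma> \<epsilon> (0, x) = 0" for x
    using support[of "(0, x)"] \<epsilon>(2) by (auto simp: cbox_Pair_iff)
  ultimately have "0 \<le> integral\<^sup>L lborel ?g"
    by simp
  have "integrable lborel ?g"
    using support
    by (intro integrable_kruzkov_integrand[OF sol f continuous_on_tilted_bump_t[OF \<epsilon>(1)]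
          continuous_on_tilted_bump_x[OF \<epsilon>(1)] compact_cbox]) blast
  then have integrable_pair: "integrable (lborel \<Otimes>\<^sub>M lborel) ?g"
    by (simp add: lborel_prod)
  have "integral\<^sup>L lborel ?g = (\<integral>t. (\<integral>x. ?g (t, x) \<partial>lborel) \<partial>lborel)"
    using lborel_pair.integral_fst'[OF integrable_pair] by (simp add: lborel_prod)
  also have "\<dots> = (\<integral>t. \<epsilon> * (\<integral>w. ?g (t, x0 + \<sigma> * (t - \<tau>) + \<epsilon> * w) \<partial>lborel) \<partial>lborel)"
    using lborel_integral_real_affine[where c=\<epsilon> and f="\<lambda>x. ?g (_, x)"] \<epsilon> by simp
  also have "\<dots> = \<epsilon> * (\<integral>s. \<epsilon> * (\<integral>w. ?g (blow_up \<tau> x0 \<sigma> \<epsilon> s w) \<partial>lborel) \<partial>lborel)"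
    using lborel_integral_real_affine[where c=\<epsilon> and t=\<tau>
        and f="\<lambda>t. \<epsilon> * (\<integral>w. ?g (t, x0 + \<sigma> * (t - \<tau>) + \<epsilon> * w) \<partial>lborel)"] \<epsilon>
    by (simp add: blow_up_def)
  also have "\<dots> = \<epsilon> * (\<integral>s. (\<integral>w. kruzkov_density f c \<sigma> s w (u (blow_up \<tau> x0 \<sigma> \<epsilon> s w)) \<partial>lborel) \<partial>lborel)"
    using \<epsilon> by (simp add: kruzkov_integrand_tilted_bump_blow_up)
  finally show ?thesis
    using \<open>0 \<le> integral\<^sup>L lborel ?g\<close> \<epsilon>(1) by (simp add: zero_le_mult_iff)
qed

section \<open>The blow-up limit at a point of the curve\<close>

lemma integral_dominated_convergence_at_right_0:
  fixes s :: "real \<Rightarrow> 'a \<Rightarrow> 'b::{banach, second_countable_topology}" and w :: "'a \<Rightarrow> real"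
  assumes "f \<in> borel_measurable M" "\<And>\<epsilon>. s \<epsilon> \<in> borel_measurable M" "integrable M w"
    and "AE x in M. ((\<lambda>\<epsilon>. s \<epsilon> x) \<longlongrightarrow> f x) (at_right 0)"
    and "\<forall>\<^sub>F \<epsilon> in at_right 0. AE x in M. norm (s \<epsilon> x) \<le> w x"
  shows "((\<lambda>\<epsilon>. integral\<^sup>L M (s \<epsilon>)) \<longlongrightarrow> integral\<^sup>L M f) (at_right 0)"
  unfolding filterlim_at_right_to_top
  using assms(1-3) assms(4)[unfolded filterlim_at_right_to_top] assms(5)[unfolded eventually_at_right_to_top]
  by (rule integral_dominated_convergence_at_top)

lemma integral_norm_bound_AE:
  fixes g :: "'a \<Rightarrow> 'b::{banach, second_countable_topology}"
  assumes "integrable M h" "g \<in> borel_measurable M" "AE x in M. norm (g x) \<le> h x"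
  shows "norm (integral\<^sup>L M g) \<le> integral\<^sup>L M h"
proof -
  have "AE x in M. norm (g x) \<le> norm (h x)"
    using assms(3) by eventually_elim auto
  then have "integrable M g"
    by (rule Bochner_Integration.integrable_bound[OF assms(1,2)])
  then show ?thesis
    using integral_norm_bound[of M g] integral_mono_AE[OF integrable_norm assms(1,3)] by linarith
qed

lemma tendsto_blow_up_offset:
  assumes "(\<gamma> has_real_derivative \<sigma>) (at \<tau>)"
  shows "((\<lambda>\<epsilon>. (snd (blow_up \<tau> (\<gamma> \<tau>) \<sigma> \<epsilon> s w) - \<gamma> (fst (blow_up \<tau> (\<gamma> \<tau>) \<sigma> \<epsilon> s w))) / \<epsilon>) \<longlongrightarrow> w)
           (at_right 0)"
proof -
  have "(\<gamma> has_real_derivative \<sigma>) (at (\<tau> + 0 * s))"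
    using assms by simp
  moreover have "((\<lambda>\<epsilon>. \<tau> + \<epsilon> * s) has_real_derivative s) (at 0 within {0<..})"
    by (auto intro!: derivative_eq_intros)
  ultimately have "((\<lambda>\<epsilon>. \<gamma> (\<tau> + \<epsilon> * s)) has_real_derivative \<sigma> * s) (at 0 within {0<..})"
    by (rule DERIV_chain2)
  then have "((\<lambda>\<epsilon>. (\<gamma> (\<tau> + \<epsilon> * s) - \<gamma> \<tau>) / \<epsilon>) \<longlongrightarrow> \<sigma> * s) (at_right 0)"
    by (simp add: has_field_derivative_iff)
  then have "((\<lambda>\<epsilon>. w - ((\<gamma> (\<tau> + \<epsilon> * s) - \<gamma> \<tau>) / \<epsilon> - \<sigma> * s)) \<longlongrightarrow> w - (\<sigma> * s - \<sigma> * s)) (at_right 0)"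
    by (intro tendsto_intros)
  moreover have "\<forall>\<^sub>F \<epsilon> in at_right 0. w - ((\<gamma> (\<tau> + \<epsilon> * s) - \<gamma> \<tau>) / \<epsilon> - \<sigma> * s) =
      (snd (blow_up \<tau> (\<gamma> \<tau>) \<sigma> \<epsilon> s w) - \<gamma> (fst (blow_up \<tau> (\<gamma> \<tau>) \<sigma> \<epsilon> s w))) / \<epsilon>"
    using eventually_at_right_less[of 0]
    by eventually_elim (simp add: blow_up_def field_simps)
  ultimately show ?thesis
    by (simp add: tendsto_cong)
qed

lemma tendsto_blow_up_point: "((\<lambda>\<epsilon>. blow_up \<tau> x0 \<sigma> \<epsilon> s w) \<longlongrightarrow> (\<tau>, x0)) (at_right 0)"
  unfolding blow_up_def by (auto intro!: tendsto_eq_intros)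

lemma tendsto_blow_up_side:
  fixes u :: "real \<times> real \<Rightarrow> real"
  assumes \<gamma>: "(\<gamma> has_real_derivative \<sigma>) (at \<tau>)"
    and left: "(u \<longlongrightarrow> a) (at (\<tau>, \<gamma> \<tau>) within {p. snd p < \<gamma> (fst p)})"
    and right: "(u \<longlongrightarrow> b) (at (\<tau>, \<gamma> \<tau>) within {p. \<gamma> (fst p) < snd p})"
    and "w \<noteq> 0"
  shows "((\<lambda>\<epsilon>. u (blow_up \<tau> (\<gamma> \<tau>) \<sigma> \<epsilon> s w)) \<longlongrightarrow> (if w < 0 then a else b)) (at_right 0)"
proof -
  let ?p = "\<lambda>\<epsilon>. blow_up \<tau> (\<gamma> \<tau>) \<sigma> \<epsilon> s w"
  let ?offset = "\<lambda>\<epsilon>. (snd (?p \<epsilon>) - \<gamma> (fst (?p \<epsilon>))) / \<epsilon>"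
  have offset: "(?offset \<longlongrightarrow> w) (at_right 0)"
    by (rule tendsto_blow_up_offset[OF \<gamma>])
  show ?thesis
  proof (cases "w < 0")
    case True
    have "\<forall>\<^sub>F \<epsilon> in at_right 0. ?p \<epsilon> \<in> {p. snd p < \<gamma> (fst p)} - {(\<tau>, \<gamma> \<tau>)}"
      using order_tendstoD(2)[OF offset True] eventually_at_right_less[of 0]
      by eventually_elim (auto simp: divide_less_0_iff)
    with tendsto_blow_up_point have "filterlim ?p (at (\<tau>, \<gamma> \<tau>) within {p. snd p < \<gamma> (fst p)}) (at_right 0)"
      by (rule filterlim_at_withinI)
    from filterlim_compose[OF left this] True show ?thesis by simp
  next
    case False
    then have "0 < w" using \<open>w \<noteq> 0\<close> by simp
    have "\<forall>\<^sub>F \<epsilon> in at_right 0. ?p \<epsilon> \<in> {p. \<gamma> (fst p) < snd p} - {(\<tau>, \<gamma> \<tau>)}"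
      using order_tendstoD(1)[OF offset \<open>0 < w\<close>] eventually_at_right_less[of 0]
      by eventually_elim (auto simp: zero_less_divide_iff)
    with tendsto_blow_up_point have "filterlim ?p (at (\<tau>, \<gamma> \<tau>) within {p. \<gamma> (fst p) < snd p}) (at_right 0)"
      by (rule filterlim_at_withinI)
    from filterlim_compose[OF right this] False show ?thesis by simp
  qed
qed

lemma bounded_near_side_limits:
  fixes u :: "'a::metric_space \<Rightarrow> real"
  assumes "(u \<longlongrightarrow> a) (at P within L)" "(u \<longlongrightarrow> b) (at P within R)"
  obtains d where "0 < d" "\<And>p. p \<in> L \<union> R \<Longrightarrow> p \<noteq> P \<Longrightarrow> dist p P < d \<Longrightarrow> \<bar>u p\<bar> \<le> max \<bar>a\<bar> \<bar>b\<bar> + 1"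
proof -
  have "\<forall>\<^sub>F p in at P within L. \<bar>u p\<bar> \<le> max \<bar>a\<bar> \<bar>b\<bar> + 1"
    using tendstoD[OF assms(1) zero_less_one] by eventually_elim (auto simp: dist_real_def)
  moreover have "\<forall>\<^sub>F p in at P within R. \<bar>u p\<bar> \<le> max \<bar>a\<bar> \<bar>b\<bar> + 1"
    using tendstoD[OF assms(2) zero_less_one] by eventually_elim (auto simp: dist_real_def)
  ultimately have "\<forall>\<^sub>F p in at P within L \<union> R. \<bar>u p\<bar> \<le> max \<bar>a\<bar> \<bar>b\<bar> + 1"
    by (simp add: eventually_within_Un)
  then show ?thesis
    using that unfolding eventually_at by blast
qed

lemma dist_blow_up_le:
  assumes "0 < \<epsilon>" "\<bar>s\<bar> \<le> 1" "\<bar>w\<bar> \<le> 1"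
  shows "dist (blow_up \<tau> x0 \<sigma> \<epsilon> s w) (\<tau>, x0) \<le> (2 + \<bar>\<sigma>\<bar>) * \<epsilon>"
proof -
  have "\<bar>\<epsilon> * s\<bar> \<le> \<epsilon>" "\<bar>\<epsilon> * w\<bar> \<le> \<epsilon>"
    using assms by (simp_all add: abs_mult mult_left_le)
  moreover have "\<bar>\<sigma> * (\<epsilon> * s)\<bar> \<le> \<bar>\<sigma>\<bar> * \<epsilon>"
    using \<open>\<bar>\<epsilon> * s\<bar> \<le> \<epsilon>\<close> by (simp add: abs_mult mult_left_mono)
  moreover have "dist (blow_up \<tau> x0 \<sigma> \<epsilon> s w) (\<tau>, x0) \<le> \<bar>\<epsilon> * s\<bar> + \<bar>\<sigma> * (\<epsilon> * s) + \<epsilon> * w\<bar>"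
    by (simp add: blow_up_def dist_Pair_Pair dist_real_def sqrt_sum_squares_le_sum_abs)
  moreover have "\<bar>\<sigma> * (\<epsilon> * s) + \<epsilon> * w\<bar> \<le> \<bar>\<sigma> * (\<epsilon> * s)\<bar> + \<bar>\<epsilon> * w\<bar>"
    by (rule abs_triangle_ineq)
  ultimately show ?thesis
    by (simp add: algebra_simps)
qed

lemma kruzkov_density_vanishes:
  "1 \<le> \<bar>s\<bar> \<or> 1 \<le> \<bar>w\<bar> \<Longrightarrow> kruzkov_density f c \<sigma> s w v = 0"
  by (auto simp: kruzkov_density_def bump_vanishes bump'_vanishes)

lemma abs_kruzkov_density_le:
  assumes "\<bar>v - c\<bar> \<le> K" "\<bar>f v - f c\<bar> \<le> F"
  shows "\<bar>kruzkov_density f c \<sigma> s w v\<bar> \<le> 4 * (F + (1 + \<bar>\<sigma>\<bar>) * K)"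
proof -
  let ?q = "kruzkov_flux f c v - \<sigma> * \<bar>v - c\<bar>"
  have bumps: "\<bar>bump' s * bump w\<bar> \<le> 4" "\<bar>bump s * bump' w\<bar> \<le> 4"
    using mult_mono[OF abs_bump'_le_4 bump_le_1] mult_mono[OF bump_le_1 abs_bump'_le_4]
    by (simp_all add: abs_mult bump_nonneg)
  have "\<bar>\<sigma> * \<bar>v - c\<bar>\<bar> \<le> \<bar>\<sigma>\<bar> * K"
    using assms(1) by (simp add: abs_mult mult_left_mono)
  then have "\<bar>?q\<bar> \<le> F + \<bar>\<sigma>\<bar> * K"
    using abs_kruzkov_flux_le[of f c v] assms(2) abs_triangle_ineq4[of "kruzkov_flux f c v" "\<sigma> * \<bar>v - c\<bar>"]
    by linarith
  then have "\<bar>bump s * bump' w\<bar> * \<bar>?q\<bar> \<le> 4 * (F + \<bar>\<sigma>\<bar> * K)"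
    by (rule mult_mono[OF bumps(2)]) auto
  moreover have "\<bar>bump' s * bump w\<bar> * \<bar>v - c\<bar> \<le> 4 * K"
    by (rule mult_mono[OF bumps(1) assms(1)]) auto
  moreover have "\<bar>kruzkov_density f c \<sigma> s w v\<bar> \<le> \<bar>bump' s * bump w\<bar> * \<bar>v - c\<bar> + \<bar>bump s * bump' w\<bar> * \<bar>?q\<bar>"
    using abs_triangle_ineq[of "bump' s * bump w * \<bar>v - c\<bar>" "bump s * bump' w * ?q"]
    unfolding kruzkov_density_def by (simp only: abs_mult abs_abs)
  ultimately show ?thesis
    by (simp add: algebra_simps)
qed

lemma isCont_kruzkov_density:
  "continuous_on UNIV f \<Longrightarrow> isCont (kruzkov_density f c \<sigma> s w) v"
  unfolding kruzkov_density_def by (intro continuous_intros isCont_kruzkov_flux)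

lemma borel_measurable_kruzkov_density_compose:
  fixes g :: "'a \<Rightarrow> real" and s w :: "'a \<Rightarrow> real"
  assumes "continuous_on UNIV f"
    and [measurable]: "g \<in> borel_measurable M" "s \<in> borel_measurable M" "w \<in> borel_measurable M"
  shows "(\<lambda>x. kruzkov_density f c \<sigma> (s x) (w x) (g x)) \<in> borel_measurable M"
proof -
  have [measurable]: "f \<in> borel_measurable borel"
    using assms(1) by (rule borel_measurable_continuous_onI)
  show ?thesis
    unfolding kruzkov_density_def kruzkov_flux_def by measurable
qed

lemma borel_measurable_kruzkov_density_blow_up:
  fixes u :: "real \<times> real \<Rightarrow> real"
  assumes "continuous_on UNIV f" "u \<in> borel_measurable lborel"
  shows "(\<lambda>(s, w). kruzkov_density f c \<sigma> s w (u (blow_up \<tau> x0 \<sigma> \<epsilon> s w))) \<in> borel_measurable (lborel \<Otimes>\<^sub>M lborel)"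
proof -
  have [measurable]: "u \<in> borel_measurable (lborel \<Otimes>\<^sub>M lborel)"
    using assms(2) by (simp add: lborel_prod)
  show ?thesis
    unfolding case_prod_beta
    by (rule borel_measurable_kruzkov_density_compose[OF assms(1)]) (unfold blow_up_def, measurable)
qed

lemma integral_kruzkov_density_step:
  "(\<integral>w. kruzkov_density f c \<sigma> s w (if w < 0 then a else b) \<partial>lborel) =
     bump' s * (\<integral>w. bump w * \<bar>(if w < 0 then a else b) - c\<bar> \<partial>lborel)
     + bump s * ((kruzkov_flux f c a - \<sigma> * \<bar>a - c\<bar>) - (kruzkov_flux f c b - \<sigma> * \<bar>b - c\<bar>))"
proof -
  let ?A = "kruzkov_flux f c a - \<sigma> * \<bar>a - c\<bar>" and ?B = "kruzkov_flux f c b - \<sigma> * \<bar>b - c\<bar>"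
  have split: "kruzkov_density f c \<sigma> s w (if w < 0 then a else b) =
      bump' s * (bump w * \<bar>(if w < 0 then a else b) - c\<bar>) + bump s * (bump' w * (if w < 0 then ?A else ?B))" for w
    by (simp add: kruzkov_density_def)
  have "integrable lborel (\<lambda>w. bump w * \<bar>(if w < 0 then a else b) - c\<bar>)"
    by (rule Bochner_Integration.integrable_bound[OF integrable_mult_left[OF integrable_bump, of "\<bar>a - c\<bar> + \<bar>b - c\<bar>"]])
      (auto intro!: always_eventually mult_left_mono simp: abs_mult bump_nonneg)
  moreover have "integrable lborel (\<lambda>w. bump' w * (if w < 0 then ?A else ?B))"
    by (rule Bochner_Integration.integrable_bound[OF integrable_mult_left[OF integrable_abs[OF integrable_bump'], of "\<bar>?A\<bar> + \<bar>?B\<bar>"]])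
      (auto intro!: always_eventually mult_left_mono simp: abs_mult)
  ultimately show ?thesis
    unfolding split by (simp add: integral_bump'_step)
qed

context
  fixes f :: "real \<Rightarrow> real" and u :: "real \<times> real \<Rightarrow> real" and \<gamma> :: "real \<Rightarrow> real"
    and \<sigma> \<tau> a b c :: real
  assumes f: "continuous_on UNIV f"
    and u: "u \<in> borel_measurable lborel"
    and \<gamma>: "(\<gamma> has_real_derivative \<sigma>) (at \<tau>)"
    and left: "(u \<longlongrightarrow> a) (at (\<tau>, \<gamma> \<tau>) within {p. snd p < \<gamma> (fst p)})"
    and right: "(u \<longlongrightarrow> b) (at (\<tau>, \<gamma> \<tau>) within {p. \<gamma> (fst p) < snd p})"
begin

lemma eventually_blow_up_bounded:
  obtains K where "\<forall>\<^sub>F \<epsilon> in at_right 0. \<forall>s w. \<bar>s\<bar> \<le> 1 \<longrightarrow> \<bar>w\<bar> \<le> 1 \<longrightarrow>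
    snd (blow_up \<tau> (\<gamma> \<tau>) \<sigma> \<epsilon> s w) \<noteq> \<gamma> (fst (blow_up \<tau> (\<gamma> \<tau>) \<sigma> \<epsilon> s w)) \<longrightarrow>
    \<bar>u (blow_up \<tau> (\<gamma> \<tau>) \<sigma> \<epsilon> s w)\<bar> \<le> K"
proof -
  obtain d where d: "0 < d"
    "\<And>p. p \<in> {p. snd p < \<gamma> (fst p)} \<union> {p. \<gamma> (fst p) < snd p} \<Longrightarrow> p \<noteq> (\<tau>, \<gamma> \<tau>) \<Longrightarrow>
       dist p (\<tau>, \<gamma> \<tau>) < d \<Longrightarrow> \<bar>u p\<bar> \<le> max \<bar>a\<bar> \<bar>b\<bar> + 1"
    using bounded_near_side_limits[OF left right] by blast
  have "\<forall>\<^sub>F \<epsilon> in at_right 0. 0 < \<epsilon> \<and> (2 + \<bar>\<sigma>\<bar>) * \<epsilon> < d"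
    using eventually_at_right_less[of 0] order_tendstoD(2)[OF tendsto_mult_right_zero[OF tendsto_ident_at] d(1)]
    by eventually_elim auto
  then have "\<forall>\<^sub>F \<epsilon> in at_right 0. \<forall>s w. \<bar>s\<bar> \<le> 1 \<longrightarrow> \<bar>w\<bar> \<le> 1 \<longrightarrow>
      snd (blow_up \<tau> (\<gamma> \<tau>) \<sigma> \<epsilon> s w) \<noteq> \<gamma> (fst (blow_up \<tau> (\<gamma> \<tau>) \<sigma> \<epsilon> s w)) \<longrightarrow>
      \<bar>u (blow_up \<tau> (\<gamma> \<tau>) \<sigma> \<epsilon> s w)\<bar> \<le> max \<bar>a\<bar> \<bar>b\<bar> + 1"
  proof (eventually_elim, intro allI impI)
    fix \<epsilon> s w
    assume \<epsilon>: "0 < \<epsilon> \<and> (2 + \<bar>\<sigma>\<bar>) * \<epsilon> < d" and "\<bar>s\<bar> \<le> 1" "\<bar>w\<bar> \<le> 1"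
      and off_curve: "snd (blow_up \<tau> (\<gamma> \<tau>) \<sigma> \<epsilon> s w) \<noteq> \<gamma> (fst (blow_up \<tau> (\<gamma> \<tau>) \<sigma> \<epsilon> s w))"
    have "dist (blow_up \<tau> (\<gamma> \<tau>) \<sigma> \<epsilon> s w) (\<tau>, \<gamma> \<tau>) \<le> (2 + \<bar>\<sigma>\<bar>) * \<epsilon>"
      using \<epsilon> \<open>\<bar>s\<bar> \<le> 1\<close> \<open>\<bar>w\<bar> \<le> 1\<close> by (blast intro: dist_blow_up_le)
    then have "dist (blow_up \<tau> (\<gamma> \<tau>) \<sigma> \<epsilon> s w) (\<tau>, \<gamma> \<tau>) < d"
      using \<epsilon> by linarith
    with off_curve show "\<bar>u (blow_up \<tau> (\<gamma> \<tau>) \<sigma> \<epsilon> s w)\<bar> \<le> max \<bar>a\<bar> \<bar>b\<bar> + 1"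
      by (intro d(2)) auto
  qed
  then show ?thesis using that by blast
qed

lemma eventually_kruzkov_density_blow_up_bounded:
  obtains C where "0 \<le> C"
    "\<forall>\<^sub>F \<epsilon> in at_right 0. \<forall>s. AE w in lborel.
       \<bar>kruzkov_density f c \<sigma> s w (u (blow_up \<tau> (\<gamma> \<tau>) \<sigma> \<epsilon> s w))\<bar> \<le> C * indicator {-1..1} s * indicator {-1..1} w"
proof -
  obtain K where K: "\<forall>\<^sub>F \<epsilon> in at_right 0. \<forall>s w. \<bar>s\<bar> \<le> 1 \<longrightarrow> \<bar>w\<bar> \<le> 1 \<longrightarrow>
      snd (blow_up \<tau> (\<gamma> \<tau>) \<sigma> \<epsilon> s w) \<noteq> \<gamma> (fst (blow_up \<tau> (\<gamma> \<tau>) \<sigma> \<epsilon> s w)) \<longrightarrow>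
      \<bar>u (blow_up \<tau> (\<gamma> \<tau>) \<sigma> \<epsilon> s w)\<bar> \<le> K"
    using eventually_blow_up_bounded by blast
  have "bounded ((\<lambda>v. f v - f c) ` {-K..K})"
    using f by (intro compact_imp_bounded compact_continuous_image continuous_intros) (auto intro: continuous_on_subset)
  then obtain F where F: "\<forall>v\<in>{-K..K}. \<bar>f v - f c\<bar> \<le> F"
    unfolding bounded_iff by auto
  define C where "C = 4 * (\<bar>F\<bar> + (1 + \<bar>\<sigma>\<bar>) * (\<bar>K\<bar> + \<bar>c\<bar>))"
  have "0 \<le> C" by (simp add: C_def)
  moreover have "\<forall>\<^sub>F \<epsilon> in at_right 0. \<forall>s. AE w in lborel.
      \<bar>kruzkov_density f c \<sigma> s w (u (blow_up \<tau> (\<gamma> \<tau>) \<sigma> \<epsilon> s w))\<bar> \<le> C * indicator {-1..1} s * indicator {-1..1} w"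
    using K eventually_at_right_less[of 0]
  proof (eventually_elim, intro allI)
    fix \<epsilon> s
    assume K: "\<forall>s w. \<bar>s\<bar> \<le> 1 \<longrightarrow> \<bar>w\<bar> \<le> 1 \<longrightarrow>
        snd (blow_up \<tau> (\<gamma> \<tau>) \<sigma> \<epsilon> s w) \<noteq> \<gamma> (fst (blow_up \<tau> (\<gamma> \<tau>) \<sigma> \<epsilon> s w)) \<longrightarrow>
        \<bar>u (blow_up \<tau> (\<gamma> \<tau>) \<sigma> \<epsilon> s w)\<bar> \<le> K" and "0 < \<epsilon>"
    \<comment> \<open>the excluded value of \<open>w\<close> is the one that puts the blow-up point on the curve\<close>
    show "AE w in lborel. \<bar>kruzkov_density f c \<sigma> s w (u (blow_up \<tau> (\<gamma> \<tau>) \<sigma> \<epsilon> s w))\<bar>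
        \<le> C * indicator {-1..1} s * indicator {-1..1} w"
      using AE_lborel_singleton[of "(\<gamma> (\<tau> + \<epsilon> * s) - \<gamma> \<tau> - \<sigma> * (\<epsilon> * s)) / \<epsilon>"]
    proof eventually_elim
      case (elim w)
      let ?v = "u (blow_up \<tau> (\<gamma> \<tau>) \<sigma> \<epsilon> s w)"
      show ?case
      proof (cases "s \<in> {-1..1} \<and> w \<in> {-1..1}")
        case True
        have "snd (blow_up \<tau> (\<gamma> \<tau>) \<sigma> \<epsilon> s w) \<noteq> \<gamma> (fst (blow_up \<tau> (\<gamma> \<tau>) \<sigma> \<epsilon> s w))"
          using elim \<open>0 < \<epsilon>\<close> by (auto simp: blow_up_def field_simps)
        with K True have "\<bar>?v\<bar> \<le> K"
          by (simp add: abs_le_iff)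
        then have "\<bar>?v - c\<bar> \<le> \<bar>K\<bar> + \<bar>c\<bar>" "\<bar>f ?v - f c\<bar> \<le> \<bar>F\<bar>"
          using F[rule_format, of ?v] by (auto simp: abs_le_iff)
        then show ?thesis
          using True abs_kruzkov_density_le by (simp add: C_def)
      next
        case False
        then show ?thesis using \<open>0 \<le> C\<close> by (auto simp: kruzkov_density_vanishes)
      qed
    qed
  qed
  ultimately show ?thesis using that by blast
qed

lemma tendsto_inner_integral_blow_up:
  "((\<lambda>\<epsilon>. \<integral>w. kruzkov_density f c \<sigma> s w (u (blow_up \<tau> (\<gamma> \<tau>) \<sigma> \<epsilon> s w)) \<partial>lborel)
     \<longlongrightarrow> (\<integral>w. kruzkov_density f c \<sigma> s w (if w < 0 then a else b) \<partial>lborel)) (at_right 0)"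
proof -
  obtain C where C: "\<forall>\<^sub>F \<epsilon> in at_right 0. \<forall>s. AE w in lborel.
      \<bar>kruzkov_density f c \<sigma> s w (u (blow_up \<tau> (\<gamma> \<tau>) \<sigma> \<epsilon> s w))\<bar> \<le> C * indicator {-1..1} s * indicator {-1..1} w"
    using eventually_kruzkov_density_blow_up_bounded by blast
  show ?thesis
  proof (rule integral_dominated_convergence_at_right_0[where w="\<lambda>w. C * indicator {-1..1} s * indicator {-1..1} w"])
    show "(\<lambda>w. kruzkov_density f c \<sigma> s w (if w < 0 then a else b)) \<in> borel_measurable lborel"
      by (intro borel_measurable_kruzkov_density_compose[OF f]) measurable
    show "(\<lambda>w. kruzkov_density f c \<sigma> s w (u (blow_up \<tau> (\<gamma> \<tau>) \<sigma> \<epsilon> s w))) \<in> borel_measurable lborel" for \<epsilon>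
      using borel_measurable_kruzkov_density_blow_up[OF f u] by measurable
    show "integrable lborel (\<lambda>w. C * indicator {-1..1} s * indicator {-1..1::real} w)"
      by (intro integrable_mult_right) simp
    show "AE w in lborel. ((\<lambda>\<epsilon>. kruzkov_density f c \<sigma> s w (u (blow_up \<tau> (\<gamma> \<tau>) \<sigma> \<epsilon> s w)))
        \<longlongrightarrow> kruzkov_density f c \<sigma> s w (if w < 0 then a else b)) (at_right 0)"
      using AE_lborel_singleton[of 0]
      by eventually_elim (rule isCont_tendsto_compose[OF isCont_kruzkov_density[OF f] tendsto_blow_up_side[OF \<gamma> left right]])
    show "\<forall>\<^sub>F \<epsilon> in at_right 0. AE w in lborel.
        norm (kruzkov_density f c \<sigma> s w (u (blow_up \<tau> (\<gamma> \<tau>) \<sigma> \<epsilon> s w))) \<le> C * indicator {-1..1} s * indicator {-1..1} w"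
      using C by eventually_elim simp
  qed
qed

lemma eventually_inner_integral_blow_up_bounded:
  obtains C where "\<forall>\<^sub>F \<epsilon> in at_right 0. \<forall>s.
    \<bar>\<integral>w. kruzkov_density f c \<sigma> s w (u (blow_up \<tau> (\<gamma> \<tau>) \<sigma> \<epsilon> s w)) \<partial>lborel\<bar> \<le> 2 * C * indicator {-1..1} s"
proof -
  obtain C where C: "\<forall>\<^sub>F \<epsilon> in at_right 0. \<forall>s. AE w in lborel.
      \<bar>kruzkov_density f c \<sigma> s w (u (blow_up \<tau> (\<gamma> \<tau>) \<sigma> \<epsilon> s w))\<bar> \<le> C * indicator {-1..1} s * indicator {-1..1} w"
    using eventually_kruzkov_density_blow_up_bounded by blast
  have "\<forall>\<^sub>F \<epsilon> in at_right 0. \<forall>s.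
      \<bar>\<integral>w. kruzkov_density f c \<sigma> s w (u (blow_up \<tau> (\<gamma> \<tau>) \<sigma> \<epsilon> s w)) \<partial>lborel\<bar> \<le> 2 * C * indicator {-1..1} s"
    using C
  proof (eventually_elim, intro allI)
    fix \<epsilon> s
    assume "\<forall>s. AE w in lborel. \<bar>kruzkov_density f c \<sigma> s w (u (blow_up \<tau> (\<gamma> \<tau>) \<sigma> \<epsilon> s w))\<bar>
        \<le> C * indicator {-1..1} s * indicator {-1..1} w"
    then have "AE w in lborel. norm (kruzkov_density f c \<sigma> s w (u (blow_up \<tau> (\<gamma> \<tau>) \<sigma> \<epsilon> s w)))
        \<le> C * indicator {-1..1} s * indicator {-1..1::real} w"
      by simp
    moreover have "integrable lborel (\<lambda>w. C * indicator {-1..1} s * indicator {-1..1::real} w)"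
      by (intro integrable_mult_right) simp
    moreover have "(\<lambda>w. kruzkov_density f c \<sigma> s w (u (blow_up \<tau> (\<gamma> \<tau>) \<sigma> \<epsilon> s w))) \<in> borel_measurable lborel"
      using borel_measurable_kruzkov_density_blow_up[OF f u] by measurable
    ultimately have "norm (\<integral>w. kruzkov_density f c \<sigma> s w (u (blow_up \<tau> (\<gamma> \<tau>) \<sigma> \<epsilon> s w)) \<partial>lborel)
        \<le> (\<integral>w. C * indicator {-1..1} s * indicator {-1..1::real} w \<partial>lborel)"
      by (intro integral_norm_bound_AE)
    then show "\<bar>\<integral>w. kruzkov_density f c \<sigma> s w (u (blow_up \<tau> (\<gamma> \<tau>) \<sigma> \<epsilon> s w)) \<partial>lborel\<bar>
        \<le> 2 * C * indicator {-1..1} s"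
      by simp
  qed
  then show ?thesis using that by blast
qed

lemma tendsto_blow_up_integral:
  "((\<lambda>\<epsilon>. \<integral>s. (\<integral>w. kruzkov_density f c \<sigma> s w (u (blow_up \<tau> (\<gamma> \<tau>) \<sigma> \<epsilon> s w)) \<partial>lborel) \<partial>lborel)
     \<longlongrightarrow> 16 / 15 * ((kruzkov_flux f c a - \<sigma> * \<bar>a - c\<bar>) - (kruzkov_flux f c b - \<sigma> * \<bar>b - c\<bar>))) (at_right 0)"
proof -
  let ?D = "(kruzkov_flux f c a - \<sigma> * \<bar>a - c\<bar>) - (kruzkov_flux f c b - \<sigma> * \<bar>b - c\<bar>)"
  define I where "I = (\<integral>w. bump w * \<bar>(if w < 0 then a else b) - c\<bar> \<partial>lborel)"
  obtain C where C: "\<forall>\<^sub>F \<epsilon> in at_right 0. \<forall>s.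
      \<bar>\<integral>w. kruzkov_density f c \<sigma> s w (u (blow_up \<tau> (\<gamma> \<tau>) \<sigma> \<epsilon> s w)) \<partial>lborel\<bar> \<le> 2 * C * indicator {-1..1} s"
    using eventually_inner_integral_blow_up_bounded by blast
  have "((\<lambda>\<epsilon>. \<integral>s. (\<integral>w. kruzkov_density f c \<sigma> s w (u (blow_up \<tau> (\<gamma> \<tau>) \<sigma> \<epsilon> s w)) \<partial>lborel) \<partial>lborel)
     \<longlongrightarrow> (\<integral>s. bump' s * I + bump s * ?D \<partial>lborel)) (at_right 0)"
  proof (rule integral_dominated_convergence_at_right_0[where w="\<lambda>s. 2 * C * indicator {-1..1} s"])
    show "(\<lambda>s. bump' s * I + bump s * ?D) \<in> borel_measurable lborel"
      by measurable
    show "(\<lambda>s. \<integral>w. kruzkov_density f c \<sigma> s w (u (blow_up \<tau> (\<gamma> \<tau>) \<sigma> \<epsilon> s w)) \<partial>lborel) \<in> borel_measurable lborel" for \<epsilon>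
      by (rule lborel.borel_measurable_lebesgue_integral[OF borel_measurable_kruzkov_density_blow_up[OF f u]])
    show "integrable lborel (\<lambda>s. 2 * C * indicator {-1..1::real} s)"
      by (intro integrable_mult_right) simp
    show "AE s in lborel. ((\<lambda>\<epsilon>. \<integral>w. kruzkov_density f c \<sigma> s w (u (blow_up \<tau> (\<gamma> \<tau>) \<sigma> \<epsilon> s w)) \<partial>lborel)
        \<longlongrightarrow> bump' s * I + bump s * ?D) (at_right 0)"
      using tendsto_inner_integral_blow_up by (simp add: integral_kruzkov_density_step I_def)
    show "\<forall>\<^sub>F \<epsilon> in at_right 0. AE s in lborel.
        norm (\<integral>w. kruzkov_density f c \<sigma> s w (u (blow_up \<tau> (\<gamma> \<tau>) \<sigma> \<epsilon> s w)) \<partial>lborel) \<le> 2 * C * indicator {-1..1} s"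
      using C by eventually_elim simp
  qed
  moreover have "(\<integral>s. bump' s * I + bump s * ?D \<partial>lborel) = 16 / 15 * ?D"
    using integrable_bump integrable_bump' by (simp add: integral_bump integral_bump')
  ultimately show ?thesis by simp
qed
end

section \<open>Jump conditions\<close>

lemma kruzkov_jump_inequality:
  fixes u :: "real \<times> real \<Rightarrow> real"
  assumes sol: "kruzkov_solution f u0 u" and f: "continuous_on UNIV f" and "0 < \<tau>"
    and \<gamma>: "(\<gamma> has_real_derivative \<sigma>) (at \<tau>)"
    and left: "(u \<longlongrightarrow> a) (at (\<tau>, \<gamma> \<tau>) within {p. snd p < \<gamma> (fst p)})"
    and right: "(u \<longlongrightarrow> b) (at (\<tau>, \<gamma> \<tau>) within {p. \<gamma> (fst p) < snd p})"
  shows "kruzkov_flux f c b - kruzkov_flux f c a \<le> \<sigma> * (\<bar>b - c\<bar> - \<bar>a - c\<bar>)"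
proof -
  have u: "u \<in> borel_measurable lborel"
    using sol by (simp add: kruzkov_solution_def)
  have "\<forall>\<^sub>F \<epsilon> in at_right 0. 0 < \<epsilon> \<and> \<epsilon> < \<tau>"
    using eventually_at_right_real[OF \<open>0 < \<tau>\<close>] by eventually_elim simp
  then have "\<forall>\<^sub>F \<epsilon> in at_right 0.
      0 \<le> (\<integral>s. (\<integral>w. kruzkov_density f c \<sigma> s w (u (blow_up \<tau> (\<gamma> \<tau>) \<sigma> \<epsilon> s w)) \<partial>lborel) \<partial>lborel)"
    by eventually_elim (use kruzkov_density_blow_up_integral_nonneg[OF sol f] in blast)
  with tendsto_blow_up_integral[OF f u \<gamma> left right]
  have "0 \<le> 16 / 15 * ((kruzkov_flux f c a - \<sigma> * \<bar>a - c\<bar>) - (kruzkov_flux f c b - \<sigma> * \<bar>b - c\<bar>))"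
    by (rule tendsto_lowerbound) simp
  then show ?thesis
    by (simp add: algebra_simps)
qed

lemma rankine_hugoniot:
  assumes jump: "\<And>c. kruzkov_flux f c b - kruzkov_flux f c a \<le> \<sigma> * (\<bar>b - c\<bar> - \<bar>a - c\<bar>)"
  shows "f b - f a = \<sigma> * (b - a)"
proof -
  have "f a - f b \<le> \<sigma> * (a - b)"
    using jump[of "max a b + 1"] by (simp add: kruzkov_flux_def algebra_simps)
  moreover have "f b - f a \<le> \<sigma> * (b - a)"
    using jump[of "min a b - 1"] by (simp add: kruzkov_flux_def algebra_simps)
  ultimately show ?thesis
    by (simp add: algebra_simps)
qed

lemma lax_entropy_condition:
  assumes jump: "\<And>c. kruzkov_flux f c b - kruzkov_flux f c a \<le> \<sigma> * (\<bar>b - c\<bar> - \<bar>a - c\<bar>)"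
    and concave: "b < a \<Longrightarrow> f a + f b < 2 * f ((a + b) / 2)"
  shows "a \<le> b"
proof (rule ccontr)
  assume "\<not> a \<le> b"
  define m where "m = (a + b) / 2"
  have "sgn (b - m) = -1" "sgn (a - m) = 1" "\<bar>b - m\<bar> = \<bar>a - m\<bar>"
    using \<open>\<not> a \<le> b\<close> by (simp_all add: m_def field_simps sgn_if)
  then have "2 * f m \<le> f a + f b"
    using jump[of m] by (simp add: kruzkov_flux_def)
  with concave \<open>\<not> a \<le> b\<close> show False
    by (simp add: m_def)
qed

lemma strict_midpoint_concave:
  fixes f f' f'' :: "real \<Rightarrow> real"
  assumes f': "\<And>y. (f has_real_derivative f' y) (at y)"
    and f'': "\<And>y. (f' has_real_derivative f'' y) (at y)" "\<And>y. f'' y < 0"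
    and "y < x"
  shows "f x + f y < 2 * f ((x + y) / 2)"
proof -
  define m where "m = (x + y) / 2"
  have "y < m" "m < x"
    using \<open>y < x\<close> by (simp_all add: m_def field_simps)
  obtain z1 where z1: "y < z1" "z1 < m" "f m - f y = (m - y) * f' z1"
    using MVT2[OF \<open>y < m\<close>] f' by blast
  obtain z2 where z2: "m < z2" "z2 < x" "f x - f m = (x - m) * f' z2"
    using MVT2[OF \<open>m < x\<close>] f' by blast
  have "f' z2 < f' z1"
    using z1(2) z2(1) f'' by (intro DERIV_neg_imp_decreasing[of z1 z2 f']) auto
  then have "(x - m) * f' z2 < (x - m) * f' z1"
    using \<open>m < x\<close> by (simp add: mult_strict_left_mono)
  moreover have "x - m = m - y"
    by (simp add: m_def field_simps)
  ultimately have "(x - m) * f' z2 < (m - y) * f' z1"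
    by simp
  then show ?thesis
    using z1(3) z2(3) by (simp add: m_def)
qed

section \<open>One-sided limits at the curve\<close>

lemma tendsto_within_open_extension:
  assumes "continuous_on S v" "P \<in> S" "open W" "P \<in> W" "T \<inter> W \<subseteq> S"
    and "\<And>p. p \<in> T \<inter> W \<Longrightarrow> u p = v p"
  shows "(u \<longlongrightarrow> v P) (at P within T)"
proof -
  have "(v \<longlongrightarrow> v P) (at P within T \<inter> W)"
    using assms(1,2,5) by (meson continuous_on_def tendsto_within_subset)
  moreover have "\<forall>\<^sub>F p in at P within T \<inter> W. u p = v p"
    using assms(6) by (simp add: eventually_at_filter)
  ultimately have "(u \<longlongrightarrow> v P) (at P within T \<inter> W)"
    by (simp add: tendsto_cong)
  moreover have "at P within T \<inter> W = at P within T"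
    using assms(3,4) by (intro at_within_nhd[of _ W]) auto
  ultimately show ?thesis
    by simp
qed

lemma tendsto_vertical_section:
  fixes \<tau> :: "'a::t1_space" and x0 :: "'b::topological_space"
  assumes "(u \<longlongrightarrow> l) (at (\<tau>, x0) within T)" "\<forall>\<^sub>F t in at \<tau> within S. (t, x0) \<in> T"
  shows "((\<lambda>t. u (t, x0)) \<longlongrightarrow> l) (at \<tau> within S)"
proof -
  have "\<forall>\<^sub>F t in at \<tau> within S. (t, x0) \<in> T - {(\<tau>, x0)}"
    using assms(2) eventually_neq_at_within[of \<tau>] by eventually_elim auto
  then have "filterlim (\<lambda>t. (t, x0)) (at (\<tau>, x0) within T) (at \<tau> within S)"
    by (intro filterlim_at_withinI tendsto_intros)
  from filterlim_compose[OF assms(1) this] show ?thesis .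
qed

lemma eventually_sgn_increment:
  assumes "(\<gamma> has_real_derivative \<sigma>) (at \<tau>)" "\<sigma> \<noteq> 0"
  shows "\<forall>\<^sub>F t in at \<tau>. sgn (\<gamma> t - \<gamma> \<tau>) = sgn \<sigma> * sgn (t - \<tau>)"
proof -
  have quotient: "((\<lambda>t. (\<gamma> t - \<gamma> \<tau>) / (t - \<tau>)) \<longlongrightarrow> \<sigma>) (at \<tau>)"
    using assms(1) by (simp add: has_field_derivative_iff)
  show ?thesis
  proof (cases "0 < \<sigma>")
    case True
    show ?thesis
      using order_tendstoD(1)[OF quotient True]
      by eventually_elim (use True in \<open>auto simp: sgn_if zero_less_divide_iff\<close>)
  next
    case False
    with assms(2) have "\<sigma> < 0" by simp
    show ?thesis
      using order_tendstoD(2)[OF quotient \<open>\<sigma> < 0\<close>]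
      by eventually_elim (use \<open>\<sigma> < 0\<close> in \<open>auto simp: sgn_if divide_less_0_iff\<close>)
  qed
qed

lemma tendsto_across_curve:
  fixes u :: "real \<times> real \<Rightarrow> real"
  assumes \<gamma>: "(\<gamma> has_real_derivative \<sigma>) (at \<tau>)" "\<sigma> \<noteq> 0"
    and left: "(u \<longlongrightarrow> a) (at (\<tau>, \<gamma> \<tau>) within {p. snd p < \<gamma> (fst p)})"
    and right: "(u \<longlongrightarrow> b) (at (\<tau>, \<gamma> \<tau>) within {p. \<gamma> (fst p) < snd p})"
  shows "((\<lambda>t. u (t, \<gamma> \<tau>)) \<longlongrightarrow> (if 0 < \<sigma> then a else b)) (at_right \<tau>)"
    and "((\<lambda>t. u (t, \<gamma> \<tau>)) \<longlongrightarrow> (if 0 < \<sigma> then b else a)) (at_left \<tau>)"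
proof -
  have increment: "\<forall>\<^sub>F t in at_right \<tau>. sgn (\<gamma> t - \<gamma> \<tau>) = sgn \<sigma> * sgn (t - \<tau>)"
    "\<forall>\<^sub>F t in at_left \<tau>. sgn (\<gamma> t - \<gamma> \<tau>) = sgn \<sigma> * sgn (t - \<tau>)"
    using eventually_sgn_increment[OF \<gamma>] by (simp_all add: eventually_at_split)
  have "\<forall>\<^sub>F t in at_right \<tau>. (t, \<gamma> \<tau>) \<in> (if 0 < \<sigma> then {p. snd p < \<gamma> (fst p)} else {p. \<gamma> (fst p) < snd p})"
    using increment(1) eventually_at_right_less[of \<tau>]
    by eventually_elim (use \<gamma>(2) in \<open>auto simp: sgn_if split: if_splits\<close>)
  then show "((\<lambda>t. u (t, \<gamma> \<tau>)) \<longlongrightarrow> (if 0 < \<sigma> then a else b)) (at_right \<tau>)"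
    using left right by (cases "0 < \<sigma>") (auto intro: tendsto_vertical_section)
  have "\<forall>\<^sub>F t in at_left \<tau>. (t, \<gamma> \<tau>) \<in> (if 0 < \<sigma> then {p. \<gamma> (fst p) < snd p} else {p. snd p < \<gamma> (fst p)})"
    using increment(2) eventually_at_left_real[of "\<tau> - 1" \<tau>, simplified]
    by eventually_elim (use \<gamma>(2) in \<open>auto simp: sgn_if split: if_splits\<close>)
  then show "((\<lambda>t. u (t, \<gamma> \<tau>)) \<longlongrightarrow> (if 0 < \<sigma> then b else a)) (at_left \<tau>)"
    using left right by (cases "0 < \<sigma>") (auto intro: tendsto_vertical_section)
qed

lemma tendsto_left_trace:
  assumes "open U" "(\<tau>, \<gamma> \<tau>) \<in> U" "t1 < \<tau>" "\<tau> < t2" "continuous_on (left_side U t1 t2 \<gamma>) uL"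
    and "\<And>t x. (t, x) \<in> U \<Longrightarrow> t1 < t \<Longrightarrow> t < t2 \<Longrightarrow> x < \<gamma> t \<Longrightarrow> uL (t, x) = u (t, x)"
  shows "(u \<longlongrightarrow> uL (\<tau>, \<gamma> \<tau>)) (at (\<tau>, \<gamma> \<tau>) within {p. snd p < \<gamma> (fst p)})"
  by (rule tendsto_within_open_extension[OF assms(5), where W="U \<inter> {t1<..<t2} \<times> UNIV"])
    (use assms in \<open>auto intro!: open_Int open_Times simp: left_side_def\<close>)

lemma tendsto_right_trace:
  assumes "open U" "(\<tau>, \<gamma> \<tau>) \<in> U" "t1 < \<tau>" "\<tau> < t2" "continuous_on (right_side U t1 t2 \<gamma>) uR"
    and "\<And>t x. (t, x) \<in> U \<Longrightarrow> t1 < t \<Longrightarrow> t < t2 \<Longrightarrow> \<gamma> t < x \<Longrightarrow> uR (t, x) = u (t, x)"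
  shows "(u \<longlongrightarrow> uR (\<tau>, \<gamma> \<tau>)) (at (\<tau>, \<gamma> \<tau>) within {p. \<gamma> (fst p) < snd p})"
  by (rule tendsto_within_open_extension[OF assms(5), where W="U \<inter> {t1<..<t2} \<times> UNIV"])
    (use assms in \<open>auto intro!: open_Int open_Times simp: right_side_def\<close>)

lemma lax_shock_one_sided_limits:
  fixes u :: "real \<times> real \<Rightarrow> real"
  assumes f: "\<And>y. isCont f y" and \<gamma>: "(\<gamma> has_real_derivative \<sigma>) (at \<tau>)" "\<sigma> \<noteq> 0"
    and left: "(u \<longlongrightarrow> a) (at (\<tau>, \<gamma> \<tau>) within {p. snd p < \<gamma> (fst p)})"
    and right: "(u \<longlongrightarrow> b) (at (\<tau>, \<gamma> \<tau>) within {p. \<gamma> (fst p) < snd p})"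
    and RH: "f b - f a = \<sigma> * (b - a)" and "a \<le> b"
  shows "\<exists>A B. ((\<lambda>t. f (u (t, \<gamma> \<tau>))) \<longlongrightarrow> A) (at_right \<tau>) \<and>
           ((\<lambda>t. f (u (t, \<gamma> \<tau>))) \<longlongrightarrow> B) (at_left \<tau>) \<and> A \<le> B"
proof -
  have "f (if 0 < \<sigma> then a else b) \<le> f (if 0 < \<sigma> then b else a)"
    using RH \<open>a \<le> b\<close> by (smt (verit) mult_nonneg_nonneg mult_nonpos_nonneg)
  with tendsto_across_curve[OF \<gamma> left right, THEN isCont_tendsto_compose[OF f]]
  show ?thesis
    by blast
qed

theorem lemma3p1:
  fixes f f' f'' :: "real \<Rightarrow> real"
    and u0 :: "real \<Rightarrow> real"
    and u uL uR :: "real \<times> real \<Rightarrow> real"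
    and \<gamma> \<gamma>' :: "real \<Rightarrow> real"
    and t1 t2 \<tau> :: real
    and U :: "(real \<times> real) set"
  assumes f_deriv: "\<And>y. (f has_real_derivative f' y) (at y)"
    and f'_deriv: "\<And>y. (f' has_real_derivative f'' y) (at y)"
    and f''_cont: "continuous_on UNIV f''"
    and f''_neg: "\<And>y. f'' y < 0"
    and u0_BV: "BV u0"
    and sol: "kruzkov_solution f u0 u"
    and t1_nonneg: "0 \<le> t1"
    and \<gamma>_deriv: "\<And>t. t1 < t \<Longrightarrow> t < t2 \<Longrightarrow> (\<gamma> has_real_derivative \<gamma>' t) (at t)"
    and \<gamma>'_cont: "continuous_on {t1<..<t2} \<gamma>'"
    and disc: "discontinuous_across u t1 t2 \<gamma>"
    and \<tau>: "t1 < \<tau>" "\<tau> < t2"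
    and U: "open U" "(\<tau>, \<gamma> \<tau>) \<in> U"
    and uL: "continuous_on (left_side U t1 t2 \<gamma>) uL"
      "\<And>t x. (t, x) \<in> U \<Longrightarrow> t1 < t \<Longrightarrow> t < t2 \<Longrightarrow> x < \<gamma> t \<Longrightarrow> uL (t, x) = u (t, x)"
    and uR: "continuous_on (right_side U t1 t2 \<gamma>) uR"
      "\<And>t x. (t, x) \<in> U \<Longrightarrow> t1 < t \<Longrightarrow> t < t2 \<Longrightarrow> \<gamma> t < x \<Longrightarrow> uR (t, x) = u (t, x)"
  shows "(\<gamma>' \<tau> \<noteq> 0 \<longrightarrow>
            (\<exists>a b. ((\<lambda>t. f (u (t, \<gamma> \<tau>))) \<longlongrightarrow> a) (at_right \<tau>) \<and>
                   ((\<lambda>t. f (u (t, \<gamma> \<tau>))) \<longlongrightarrow> b) (at_left \<tau>) \<and> a \<le> b))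
       \<and> (\<gamma>' \<tau> = 0 \<longrightarrow> f (uL (\<tau>, \<gamma> \<tau>)) = f (uR (\<tau>, \<gamma> \<tau>)))"
proof -
  have f: "isCont f y" for y
    using f_deriv by (rule DERIV_isCont)
  define a b where "a = uL (\<tau>, \<gamma> \<tau>)" and "b = uR (\<tau>, \<gamma> \<tau>)"
  have \<gamma>: "(\<gamma> has_real_derivative \<gamma>' \<tau>) (at \<tau>)"
    using \<gamma>_deriv \<tau> by simp
  have left: "(u \<longlongrightarrow> a) (at (\<tau>, \<gamma> \<tau>) within {p. snd p < \<gamma> (fst p)})"
    unfolding a_def using U \<tau> uL by (rule tendsto_left_trace)
  have right: "(u \<longlongrightarrow> b) (at (\<tau>, \<gamma> \<tau>) within {p. \<gamma> (fst p) < snd p})"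
    unfolding b_def using U \<tau> uR by (rule tendsto_right_trace)
  have jump: "kruzkov_flux f c b - kruzkov_flux f c a \<le> \<gamma>' \<tau> * (\<bar>b - c\<bar> - \<bar>a - c\<bar>)" for c
    using t1_nonneg \<tau> f
    by (intro kruzkov_jump_inequality[OF sol _ _ \<gamma> left right] continuous_at_imp_continuous_on) auto
  have RH: "f b - f a = \<gamma>' \<tau> * (b - a)"
    by (rule rankine_hugoniot[OF jump])
  have "a \<le> b"
    using jump strict_midpoint_concave[OF f_deriv f'_deriv f''_neg, of b a] by (rule lax_entropy_condition)
  show ?thesis
  proof (intro conjI impI)
    assume "\<gamma>' \<tau> \<noteq> 0"
    from lax_shock_one_sided_limits[OF f \<gamma> this left right RH \<open>a \<le> b\<close>]
    show "\<exists>a b. ((\<lambda>t. f (u (t, \<gamma> \<tau>))) \<longlongrightarrow> a) (at_right \<tau>) \<and>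
        ((\<lambda>t. f (u (t, \<gamma> \<tau>))) \<longlongrightarrow> b) (at_left \<tau>) \<and> a \<le> b" .
  next
    assume "\<gamma>' \<tau> = 0"
    with RH have "f a = f b"
      by simp
    then show "f (uL (\<tau>, \<gamma> \<tau>)) = f (uR (\<tau>, \<gamma> \<tau>))"
      by (simp only: a_def b_def)
  qed
qed

end
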